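(* For every $T\ge0$ and integers $0\le\ell\le k$, $a(k,T)-a(\ell,T)\le k-\ell$. In particular $a(k+1,T)\le a(k,T)+1$.
   Context: Let $\lambda>0$ and let $N$ be a Poisson process with intensity $\lambda$, arrival times $0<\sigma_1<\sigma_2<\cdots$, and natural filtration $\mathcal F_t=\sigma(N_s:s\le t)$. Let $F:[0,\infty)\to[0,\infty)$ be strictly increasing and strictly convex with $F(0)=0$. For $k\in\{0,1,\dots\}$ let $\mathcal A_k$ be the set of $(\mathcal F_t)$-adapted, integer-valued, nonnegative, non-increasing processes $\xi$ with $\xi_0=k$ whose values change only at arrival times of $N$, and $v(k,T)=\inf_{\xi\in\mathcal A_k}\mathbb E[\sum_{i:\sigma_i\le T}F(\xi_{\sigma_i-}-\xi_{\sigma_i})+F(\xi_T)]$. For $k\in\mathbb N_+$, $a(k,T)$ is the smallest minimizer over $a\in\{1,\dots,k\}$ of $v(k-a,T)+F(a)$, and $a(0,T)=0$. *)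

theory Defs
  imports "HOL-Probability.Probability"
begin

definition strict_convex_on :: "real set \<Rightarrow> (real \<Rightarrow> real) \<Rightarrow> bool" where
  "strict_convex_on S f \<longleftrightarrow>
     (\<forall>x\<in>S. \<forall>y\<in>S. \<forall>t. x \<noteq> y \<and> 0 < t \<and> t < 1 \<longrightarrow>
        f (t * x + (1 - t) * y) < t * f x + (1 - t) * f y)"

text \<open>Poisson process built from interarrival times E 0, E 1, ...:
  the i-th arrival time (i \<ge> 1) is sigma_i = E 0 + ... + E (i-1).\<close>
definition arrival :: "(nat \<Rightarrow> 'a \<Rightarrow> real) \<Rightarrow> nat \<Rightarrow> 'a \<Rightarrow> real" where
  "arrival E i \<omega> = (\<Sum>j<i. E j \<omega>)"

definition count_proc :: "(nat \<Rightarrow> 'a \<Rightarrow> real) \<Rightarrow> real \<Rightarrow> 'a \<Rightarrow> nat" where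
  "count_proc E t \<omega> = card {i. 1 \<le> i \<and> arrival E i \<omega> \<le> t}"

definition poisson_interarrivals :: "'a measure \<Rightarrow> real \<Rightarrow> (nat \<Rightarrow> 'a \<Rightarrow> real) \<Rightarrow> bool" where
  "poisson_interarrivals M lam E \<longleftrightarrow>
     prob_space M \<and> 0 < lam \<and>
     prob_space.indep_vars M (\<lambda>_. borel) E UNIV \<and>
     (\<forall>i. distributed M lborel (E i) (exponential_density lam))"

definition nat_filt :: "'a measure \<Rightarrow> (nat \<Rightarrow> 'a \<Rightarrow> real) \<Rightarrow> real \<Rightarrow> 'a measure" where
  "nat_filt M E t = sigma (space M)
     {count_proc E s -` A \<inter> space M | s A. 0 \<le> s \<and> s \<le> t}"

text \<open>Admissible strategies A_k: adapted, nat-valued (hence integer and nonnegative),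
  non-increasing, starting at k, and changing only at arrival times
  (no arrival in (s,t] implies xi_s = xi_t).\<close>
definition admissible :: "'a measure \<Rightarrow> (nat \<Rightarrow> 'a \<Rightarrow> real) \<Rightarrow> nat \<Rightarrow> (real \<Rightarrow> 'a \<Rightarrow> nat) set" where
  "admissible M E k = {\<xi>.
     (\<forall>t\<ge>0. \<xi> t \<in> measurable (nat_filt M E t) (count_space UNIV)) \<and>
     (\<forall>\<omega>\<in>space M. \<xi> 0 \<omega> = k) \<and>
     (\<forall>\<omega>\<in>space M. \<forall>s t. 0 \<le> s \<and> s \<le> t \<longrightarrow> \<xi> t \<omega> \<le> \<xi> s \<omega>) \<and>
     (\<forall>\<omega>\<in>space M. \<forall>s t. 0 \<le> s \<and> s \<le> t \<and> count_proc E s \<omega> = count_proc E t \<omega>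
          \<longrightarrow> \<xi> t \<omega> = \<xi> s \<omega>)}"

definition left_lim :: "(real \<Rightarrow> 'a \<Rightarrow> nat) \<Rightarrow> real \<Rightarrow> 'a \<Rightarrow> real" where
  "left_lim \<xi> t \<omega> = Lim (at_left t) (\<lambda>s. real (\<xi> s \<omega>))"

definition cost :: "(nat \<Rightarrow> 'a \<Rightarrow> real) \<Rightarrow> (real \<Rightarrow> real) \<Rightarrow> real \<Rightarrow> (real \<Rightarrow> 'a \<Rightarrow> nat) \<Rightarrow> 'a \<Rightarrow> ennreal" where
  "cost E F T \<xi> \<omega> =
     (\<Sum>i. if 1 \<le> i \<and> arrival E i \<omega> \<le> T
           then ennreal (F (left_lim \<xi> (arrival E i \<omega>) \<omega> - real (\<xi> (arrival E i \<omega>) \<omega>)))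
           else 0)
     + ennreal (F (real (\<xi> T \<omega>)))"

definition value_fn :: "'a measure \<Rightarrow> (nat \<Rightarrow> 'a \<Rightarrow> real) \<Rightarrow> (real \<Rightarrow> real) \<Rightarrow> nat \<Rightarrow> real \<Rightarrow> ennreal" where
  "value_fn M E F k T = (INF \<xi> \<in> admissible M E k. \<integral>\<^sup>+ \<omega>. cost E F T \<xi> \<omega> \<partial>M)"

definition opt_a :: "'a measure \<Rightarrow> (nat \<Rightarrow> 'a \<Rightarrow> real) \<Rightarrow> (real \<Rightarrow> real) \<Rightarrow> nat \<Rightarrow> real \<Rightarrow> nat" where
  "opt_a M E F k T = (if k = 0 then 0 else
     (LEAST a. 1 \<le> a \<and> a \<le> k \<and>
        (\<forall>b. 1 \<le> b \<and> b \<le> k \<longrightarrow>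
           value_fn M E F (k - a) T + ennreal (F (real a))
             \<le> value_fn M E F (k - b) T + ennreal (F (real b)))))"

end

theory Submission
  imports Defs
begin

text \<open>The strategy that never trades costs F(k), so v(\<cdot>,T) is finite and a(k,T) is the least
  minimiser of a \<mapsto> w(k - a) + g(a) over {1..k}, where w(j) = v(j,T) is real and g(n) = F(n) has
  nondecreasing increments by convexity. If the least minimisers A at level k and B at level
  l \<le> k satisfied A > B + (k - l), then comparing B with A - (k - l) at level l and using
  g(A - (k - l)) - g(B) \<le> g(A) - g(B + (k - l)) shows that B + (k - l) < A is no worse than A
  at level k, contradicting the leastness of A.\<close>

lemma strict_convex_on_imp_convex_on:
  assumes "strict_convex_on S f" "convex S"
  shows "convex_on S f"
proof (rule convex_on_linorderI)
  fix t x y :: real assume "0 < t" "t < 1" "x \<in> S" "y \<in> S" "x < y"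
  then have "f ((1 - t) * x + (1 - (1 - t)) * y) < (1 - t) * f x + (1 - (1 - t)) * f y"
    using assms(1)[unfolded strict_convex_on_def, rule_format, of x y "1 - t"] by simp
  then show "f ((1 - t) *\<^sub>R x + t *\<^sub>R y) \<le> (1 - t) * f x + t * f y"
    by simp
qed (fact assms(2))

lemma convex_on_increment_mono:
  fixes f :: "real \<Rightarrow> real"
  assumes f: "convex_on S f" and S: "x \<in> S" "x + d + e \<in> S" and "0 \<le> d" "0 \<le> e"
  shows "f (x + d) - f x \<le> f (x + d + e) - f (x + e)"
proof (cases "d + e = 0")
  case True
  then have "d = 0" "e = 0" using \<open>0 \<le> d\<close> \<open>0 \<le> e\<close> by linarith+
  then show ?thesis by simp
next
  case False
  then have de: "0 < d + e" using \<open>0 \<le> d\<close> \<open>0 \<le> e\<close> by linarith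
  have mix: "f ((1 - t) * x + t * (x + d + e)) \<le> (1 - t) * f x + t * f (x + d + e)"
    if "0 \<le> t" "t \<le> 1" for t
    using convex_onD[OF f that S] by simp
  have affine: "(1 - t) * x + t * (x + d + e) = x + t * (d + e)" for t
    by (simp add: algebra_simps)
  have "x + d = (1 - d / (d + e)) * x + d / (d + e) * (x + d + e)"
   and "x + e = (1 - e / (d + e)) * x + e / (d + e) * (x + d + e)"
    unfolding affine using de by simp_all
  moreover have "0 \<le> d / (d + e)" "d / (d + e) \<le> 1" "0 \<le> e / (d + e)" "e / (d + e) \<le> 1"
    using \<open>0 \<le> d\<close> \<open>0 \<le> e\<close> de by simp_all
  ultimately have "f (x + d) \<le> (1 - d / (d + e)) * f x + d / (d + e) * f (x + d + e)"
    and "f (x + e) \<le> (1 - e / (d + e)) * f x + e / (d + e) * f (x + d + e)"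
    using mix by metis+
  then have "f (x + d) + f (x + e) \<le>
      (1 - d / (d + e)) * f x + d / (d + e) * f (x + d + e)
    + ((1 - e / (d + e)) * f x + e / (d + e) * f (x + d + e))"
    by (rule add_mono)
  also have "\<dots> = f x + f (x + d + e)"
  proof -
    have "e / (d + e) = 1 - d / (d + e)"
      using de by (simp add: field_simps)
    moreover have "(1 - t) * a + t * b + ((1 - (1 - t)) * a + (1 - t) * b) = a + b"
      for t a b :: real
      by (simp add: algebra_simps)
    ultimately show ?thesis by (simp only:)
  qed
  finally show ?thesis by simp
qed

definition is_split_minimizer :: "(nat \<Rightarrow> real) \<Rightarrow> (nat \<Rightarrow> real) \<Rightarrow> nat \<Rightarrow> nat \<Rightarrow> bool" where
  "is_split_minimizer w g k a \<longleftrightarrow> 1 \<le> a \<and> a \<le> k \<and>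
     (\<forall>b. 1 \<le> b \<and> b \<le> k \<longrightarrow> w (k - a) + g a \<le> w (k - b) + g b)"

definition least_split_minimizer :: "(nat \<Rightarrow> real) \<Rightarrow> (nat \<Rightarrow> real) \<Rightarrow> nat \<Rightarrow> nat" where
  "least_split_minimizer w g k = (if k = 0 then 0 else LEAST a. is_split_minimizer w g k a)"

lemma is_split_minimizer_exists:
  assumes "1 \<le> k"
  shows "\<exists>a. is_split_minimizer w g k a"
proof -
  obtain a where "a \<in> {1..k}" "\<forall>b\<in>{1..k}. w (k - a) + g a \<le> w (k - b) + g b"
    using arg_min_if_finite[of "{1..k}" "\<lambda>b. w (k - b) + g b"] assms by (auto simp: not_less)
  then show ?thesis unfolding is_split_minimizer_def by auto
qed

lemma least_split_minimizer:
  assumes "1 \<le> k"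
  shows "is_split_minimizer w g k (least_split_minimizer w g k)"
  using LeastI_ex[OF is_split_minimizer_exists[OF assms]] assms
  by (simp add: least_split_minimizer_def)

lemma least_split_minimizer_le:
  "least_split_minimizer w g k \<le> k"
  using least_split_minimizer[of k w g]
  by (cases "k = 0") (auto simp: least_split_minimizer_def is_split_minimizer_def)

lemma least_split_minimizer_le_shift:
  assumes incr: "\<And>x d e. g (x + d) - g x \<le> g (x + d + e) - g (x + e)"
    and "l \<le> k"
  shows "least_split_minimizer w g k \<le> least_split_minimizer w g l + (k - l)"
proof (cases "l = 0")
  case True
  then show ?thesis using least_split_minimizer_le[of w g k] by simp
next
  case False
  define A where "A = least_split_minimizer w g k"
  define B where "B = least_split_minimizer w g l"
  have A: "is_split_minimizer w g k A" and B: "is_split_minimizer w g l B"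
    using least_split_minimizer False \<open>l \<le> k\<close> unfolding A_def B_def by simp_all
  have A_bounds: "1 \<le> A" "A \<le> k" and B_bounds: "1 \<le> B" "B \<le> l"
    using A B unfolding is_split_minimizer_def by simp_all
  show ?thesis unfolding A_def[symmetric] B_def[symmetric]
  proof (rule ccontr)
    assume "\<not> A \<le> B + (k - l)"
    define d where "d = A - (k - l) - B"
    have A_eq: "A = B + d + (k - l)" and "0 < d"
      using \<open>\<not> A \<le> B + (k - l)\<close> unfolding d_def by simp_all
    have "w (l - B) + g B \<le> w (l - (B + d)) + g (B + d)"
      using B A_bounds \<open>l \<le> k\<close> unfolding is_split_minimizer_def A_eq by simp
    moreover have "l - (B + d) = k - A" and "k - (B + (k - l)) = l - B"
      using A_eq A_bounds B_bounds \<open>l \<le> k\<close> by simp_all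
    moreover have "g (B + d) - g B \<le> g A - g (B + (k - l))"
      using incr[of B d "k - l"] A_eq by simp
    ultimately have shifted_le: "w (k - (B + (k - l))) + g (B + (k - l)) \<le> w (k - A) + g A"
      by simp
    have "w (k - A) + g A \<le> w (k - c) + g c" if "1 \<le> c" "c \<le> k" for c
      using A that unfolding is_split_minimizer_def by blast
    then have "is_split_minimizer w g k (B + (k - l))"
      using shifted_le B_bounds \<open>l \<le> k\<close> unfolding is_split_minimizer_def
      by (auto intro: order_trans)
    then have "A \<le> B + (k - l)"
      using False \<open>l \<le> k\<close> unfolding A_def least_split_minimizer_def by (simp add: Least_le)
    with \<open>0 < d\<close> A_eq show False by simp
  qed
qed

lemma value_fn_le_constant_strategy:
  assumes "prob_space M" "F 0 = 0"
  shows "value_fn M E F j T \<le> ennreal (F (real j))"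
proof -
  define \<xi> :: "real \<Rightarrow> 'a \<Rightarrow> nat" where "\<xi> = (\<lambda>t \<omega>. j)"
  have "\<xi> \<in> admissible M E j"
    unfolding admissible_def \<xi>_def by auto
  have \<xi>_const: "\<xi> t \<omega> = j" for t \<omega>
    by (simp add: \<xi>_def)
  have left_lim_const: "left_lim \<xi> t \<omega> = real j" for t \<omega>
    unfolding left_lim_def \<xi>_def by (rule tendsto_Lim) (auto simp: trivial_limit_at_left_real)
  have "cost E F T \<xi> \<omega> = ennreal (F (real j))" for \<omega>
    unfolding cost_def by (simp add: \<xi>_const left_lim_const \<open>F 0 = 0\<close> cong: if_cong)
  then have "(\<integral>\<^sup>+ \<omega>. cost E F T \<xi> \<omega> \<partial>M) = ennreal (F (real j))"
    using prob_space.emeasure_space_1[OF assms(1)] by simp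
  then show ?thesis
    unfolding value_fn_def using \<open>\<xi> \<in> admissible M E j\<close> by (metis INF_lower)
qed

lemma opt_a_eq_least_split_minimizer:
  assumes "prob_space M" "F 0 = 0" "\<And>n. 0 \<le> F (real n)"
  shows "opt_a M E F k T =
    least_split_minimizer (\<lambda>j. enn2real (value_fn M E F j T)) (\<lambda>n. F (real n)) k"
proof -
  define w where "w j = enn2real (value_fn M E F j T)" for j
  have "value_fn M E F j T < \<top>" for j
    using value_fn_le_constant_strategy[where F = F, OF assms(1,2), of E j T]
    by (simp add: le_less_trans)
  then have v: "value_fn M E F j T = ennreal (w j)" for j
    unfolding w_def by (simp add: ennreal_enn2real)
  have "(value_fn M E F (k - a) T + ennreal (F (real a))
        \<le> value_fn M E F (k - b) T + ennreal (F (real b)))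
      \<longleftrightarrow> w (k - a) + F (real a) \<le> w (k - b) + F (real b)" for a b
    unfolding v using assms(3) by (simp add: w_def ennreal_plus[symmetric] del: ennreal_plus)
  then show ?thesis
    unfolding opt_a_def least_split_minimizer_def is_split_minimizer_def w_def by simp
qed

theorem corollary2p6:
  fixes M :: "'a measure" and lam :: real and E :: "nat \<Rightarrow> 'a \<Rightarrow> real"
    and F :: "real \<Rightarrow> real" and T :: real and k l :: nat
  assumes "poisson_interarrivals M lam E"
    and "F 0 = 0"
    and "\<forall>x\<ge>0. F x \<ge> 0"
    and "strict_mono_on {0..} F"
    and "strict_convex_on {0..} F"
    and "0 \<le> T"
    and "l \<le> k"
  shows "int (opt_a M E F k T) - int (opt_a M E F l T) \<le> int k - int l
    \<and> opt_a M E F (k + 1) T \<le> opt_a M E F k T + 1"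
proof -
  have "prob_space M"
    using assms(1) unfolding poisson_interarrivals_def by simp
  then have a_eq: "opt_a M E F j T =
      least_split_minimizer (\<lambda>j. enn2real (value_fn M E F j T)) (\<lambda>n. F (real n)) j" for j
    by (rule opt_a_eq_least_split_minimizer) (use assms(2,3) in simp_all)
  have "convex_on {0..} F"
    using strict_convex_on_imp_convex_on[OF assms(5)] by simp
  then have incr: "F (real (x + d)) - F (real x) \<le> F (real (x + d + e)) - F (real (x + e))"
    for x d e
    using convex_on_increment_mono[of "{0..}" F "real x" "real d" "real e"] by simp
  have shift: "opt_a M E F j T \<le> opt_a M E F i T + (j - i)" if "i \<le> j" for i j
    unfolding a_eq by (rule least_split_minimizer_le_shift) (use incr that in simp_all)
  show ?thesis
    using shift[OF assms(7)] shift[of k "k + 1"] assms(7) by simp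
qed

end
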